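(* The LDP-FPMiner algorithm described below satisfies $\epsilon$-local differential privacy: every user's transaction is used in exactly one randomized report, and the map from the user's transaction to that report is an $\epsilon$-locally differentially private algorithm; all remaining computations are performed by the analyst on the reports only.
   Context: A randomized algorithm $\mathcal{A}$ satisfies $\epsilon$-local differential privacy ($\epsilon$-LDP) if for all inputs $t_i,t_j$ and every possible output $\mathcal{O}$, $\Pr[\mathcal{A}(t_i)=\mathcal{O}]\le e^{\epsilon}\Pr[\mathcal{A}(t_j)=\mathcal{O}]$. Optimized Local Hashing (OLH) with budget $\epsilon$ over a finite domain $D$: with $g=\lceil e^\epsilon+1\rceil$, a user with value $u\in D$ picks a hash $H$ uniformly from a universal family $D\to[g]$, sets $x=H(u)$ and reports $\langle H,y\rangle$ with $y=x$ with probability $\frac{e^\epsilon}{e^\epsilon+g-1}$ and $y=i$ with probability $\frac{1}{e^\epsilon+g-1}$ for each $i\ne x$; this is $\epsilon$-LDP. LDP-FPMiner$(\mathcal{T},\mathcal{X},k,\epsilon)$: users (each holding a transaction $t\subseteq\mathcal{X}$) are randomly partitioned into three disjoint groups $G_1,G_2,G_3$. (1) With $G_1$, the SVIM protocol computes a set $S'$ of $k$ frequent items and their estimated frequencies; in SVIM each user of $G_1$ sends exactly one report produced by OLH with budget $\epsilon$ (about one item sampled from her transaction, or about the size of her transaction pruned to a candidate domain, or about one item sampled from her pruned transaction padded with dummy items). (2) Each user of $G_2$ reports the number $|t\cap S'|$ via OLH with budget $\epsilon$; the analyst sets $M$ to the estimated 80th percentile of these numbers. (3) With $G_3$, a noisy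 FP-tree is built: $G_3$ is split into $M$ disjoint groups $g_1,\dots,g_M$; each user keeps the items of her transaction in $S'$ sorted by descending estimated frequency; at level $l$ the analyst forms (from previously released estimates only) a candidate set $C_l$ of prefixes, and each user of $g_l$ reports once, via OLH with budget $\epsilon$ over $C_l\cup\{\dagger\}$, her first $l$ items (or $\dagger$ if not in $C_l$). (4) The analyst mines the noisy tree with the FP-growth algorithm and releases $k$ itemsets. *)

theory Defs
  imports "HOL-Probability.Probability"
begin

definition ldp :: "real \<Rightarrow> ('t \<Rightarrow> 'o pmf) \<Rightarrow> bool" where
  "ldp \<epsilon> A \<longleftrightarrow> (\<forall>t t' out. pmf (A t) out \<le> exp \<epsilon> * pmf (A t') out)"

definition olh_g :: "real \<Rightarrow> nat" where
  "olh_g \<epsilon> = nat \<lceil>exp \<epsilon> + 1\<rceil>"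

definition universal_family :: "'d set \<Rightarrow> nat \<Rightarrow> ('d \<Rightarrow> nat) set \<Rightarrow> bool" where
  "universal_family D g H \<longleftrightarrow> finite H \<and> H \<noteq> {} \<and>
     (\<forall>h\<in>H. \<forall>u\<in>D. h u < g) \<and>
     (\<forall>x\<in>D. \<forall>y\<in>D. x \<noteq> y \<longrightarrow> real (card {h\<in>H. h x = h y}) \<le> real (card H) / real g)"

definition olh_perturb :: "real \<Rightarrow> nat \<Rightarrow> nat \<Rightarrow> nat pmf" where
  "olh_perturb \<epsilon> g x =
     bernoulli_pmf (exp \<epsilon> / (exp \<epsilon> + real g - 1)) \<bind>
       (\<lambda>b. if b then return_pmf x else pmf_of_set ({0..<g} - {x}))"

definition olh :: "real \<Rightarrow> ('d \<Rightarrow> nat) set \<Rightarrow> 'd \<Rightarrow> (('d \<Rightarrow> nat) \<times> nat) pmf" where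
  "olh \<epsilon> H u = pmf_of_set H \<bind> (\<lambda>h. map_pmf (\<lambda>y. (h, y)) (olh_perturb \<epsilon> (olh_g \<epsilon>) (h u)))"

text \<open>Interactive protocol: users report one at a time in the order given by a list;
  the mechanism used in a round is chosen by the analyst from the reports
  released so far (the transcript prefix).\<close>
fun run_protocol ::
  "('r list \<Rightarrow> 't \<Rightarrow> 'r pmf) \<Rightarrow> (nat \<Rightarrow> 't) \<Rightarrow> 'r list \<Rightarrow> nat list \<Rightarrow> 'r list pmf" where
  "run_protocol mech T acc [] = return_pmf acc"
| "run_protocol mech T acc (u # us) =
     mech acc (T u) \<bind> (\<lambda>r. run_protocol mech T (acc @ [r]) us)"

end

theory Submission
  imports Defs
begin

text \<open>Every OLH report \<open>(h, y)\<close> with \<open>h \<in> H\<close> and \<open>y < g\<close> has probability \<open>c\<close> or \<open>e\<^sup>\<epsilon> c\<close>,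
  where \<open>c = 1 / ((e\<^sup>\<epsilon> + g - 1) |H|)\<close> does not depend on the user's value; any other report has
  probability 0. Averaging over the preprocessing (sampling, pruning, padding) keeps the
  probability of each report in \<open>[c, e\<^sup>\<epsilon> c]\<close>, so each round is \<open>\<epsilon>\<close>-LDP whatever the analyst
  chose from earlier reports. Two inputs differing only in user \<open>i\<close>'s transaction give
  identical kernels in every round except the single one where \<open>i\<close> reports, hence the
  transcript, and anything the analyst computes from it, changes by a factor at most \<open>e\<^sup>\<epsilon>\<close>.\<close>

definition pmf_le_scaled :: "real \<Rightarrow> 'a pmf \<Rightarrow> 'a pmf \<Rightarrow> bool" where
  "pmf_le_scaled c M M' \<longleftrightarrow> (\<forall>x. pmf M x \<le> c * pmf M' x)"

lemma ldp_iff_pmf_le_scaled: "ldp \<epsilon> A \<longleftrightarrow> (\<forall>t t'. pmf_le_scaled (exp \<epsilon>) (A t) (A t'))"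
  by (simp add: ldp_def pmf_le_scaled_def)

lemma pmf_le_scaled_refl: "c \<ge> 1 \<Longrightarrow> pmf_le_scaled c M M"
  unfolding pmf_le_scaled_def by (simp add: mult_le_cancel_right1)

lemma integrable_pmf_kernel: "integrable (measure_pmf M) (\<lambda>x. pmf (f x) i)"
  by (rule measure_pmf.integrable_const_bound[where B = 1]) (simp_all add: pmf_le_1)

lemma pmf_le_scaled_bind_left:
  fixes f :: "'a \<Rightarrow> 'b pmf"
  assumes le: "pmf_le_scaled c M M'" and "c \<ge> 0"
  shows "pmf_le_scaled c (M \<bind> f) (M' \<bind> f)"
  unfolding pmf_le_scaled_def
proof
  fix x
  have "ennreal (pmf (M \<bind> f) x) = (\<integral>\<^sup>+ y. ennreal (pmf M y) * pmf (f y) x \<partial>count_space UNIV)"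
    by (simp add: ennreal_pmf_bind nn_integral_measure_pmf)
  also have "\<dots> \<le> (\<integral>\<^sup>+ y. ennreal c * (ennreal (pmf M' y) * pmf (f y) x) \<partial>count_space UNIV)"
  proof (rule nn_integral_mono)
    fix y
    have "pmf M y * pmf (f y) x \<le> c * pmf M' y * pmf (f y) x"
      using le by (simp add: pmf_le_scaled_def mult_right_mono)
    then show "ennreal (pmf M y) * pmf (f y) x \<le> ennreal c * (ennreal (pmf M' y) * pmf (f y) x)"
      using \<open>c \<ge> 0\<close> by (simp add: ennreal_mult'[symmetric] ennreal_leI mult.assoc)
  qed
  also have "\<dots> = ennreal (c * pmf (M' \<bind> f) x)"
    using \<open>c \<ge> 0\<close>
    by (simp add: nn_integral_cmult ennreal_pmf_bind nn_integral_measure_pmf ennreal_mult)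
  finally show "pmf (M \<bind> f) x \<le> c * pmf (M' \<bind> f) x"
    using \<open>c \<ge> 0\<close> by (simp add: ennreal_le_iff)
qed

lemma pmf_le_scaled_bind_right:
  fixes f f' :: "'a \<Rightarrow> 'b pmf"
  assumes "\<And>r. pmf_le_scaled c (f r) (f' r)"
  shows "pmf_le_scaled c (M \<bind> f) (M \<bind> f')"
  unfolding pmf_le_scaled_def
proof
  fix x
  have "pmf (M \<bind> f) x = (\<integral>r. pmf (f r) x \<partial>M)"
    by (rule pmf_bind)
  also have "\<dots> \<le> (\<integral>r. c * pmf (f' r) x \<partial>M)"
    using assms by (intro integral_mono integrable_pmf_kernel integrable_mult_right)
      (simp_all add: pmf_le_scaled_def)
  also have "\<dots> = c * pmf (M \<bind> f') x"
    by (simp add: pmf_bind)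
  finally show "pmf (M \<bind> f) x \<le> c * pmf (M \<bind> f') x" .
qed

lemma pmf_le_scaled_map:
  assumes "pmf_le_scaled c M M'" "c \<ge> 0"
  shows "pmf_le_scaled c (map_pmf h M) (map_pmf h M')"
  using pmf_le_scaled_bind_left[OF assms, of "\<lambda>x. return_pmf (h x)"] by (simp add: map_pmf_def)

lemma pmf_bind_ge_const:
  fixes K :: "'a \<Rightarrow> 'b pmf"
  assumes "\<And>u. u \<in> set_pmf M \<Longrightarrow> a \<le> pmf (K u) z"
  shows "a \<le> pmf (M \<bind> K) z"
  unfolding pmf_bind
  using assms by (intro measure_pmf.integral_ge_const integrable_pmf_kernel)
    (simp add: AE_measure_pmf_iff)

lemma pmf_bind_le_const:
  fixes K :: "'a \<Rightarrow> 'b pmf"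
  assumes "\<And>u. u \<in> set_pmf M \<Longrightarrow> pmf (K u) z \<le> b"
  shows "pmf (M \<bind> K) z \<le> b"
  unfolding pmf_bind
  using assms by (intro measure_pmf.integral_le_const integrable_pmf_kernel)
    (simp add: AE_measure_pmf_iff)

lemma run_protocol_cong_except:
  assumes "\<forall>j. j \<noteq> i \<longrightarrow> T j = T' j" "i \<notin> set us"
  shows "run_protocol mech T acc us = run_protocol mech T' acc us"
  using assms(2) by (induction us arbitrary: acc) (auto simp: assms(1))

lemma run_protocol_pmf_le_scaled:
  assumes ldp: "\<And>acc. ldp \<epsilon> (mech acc)" and "\<epsilon> \<ge> 0"
    and neighbours: "\<forall>j. j \<noteq> i \<longrightarrow> T j = T' j" and "distinct us"
  shows "pmf_le_scaled (exp \<epsilon>) (run_protocol mech T acc us) (run_protocol mech T' acc us)"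
  using \<open>distinct us\<close>
proof (induction us arbitrary: acc)
  case Nil
  show ?case using \<open>\<epsilon> \<ge> 0\<close> by (simp add: pmf_le_scaled_refl)
next
  case (Cons u us)
  show ?case
  proof (cases "u = i")
    case True
    with Cons.prems have "i \<notin> set us" by auto
    then have later_rounds: "run_protocol mech T a us = run_protocol mech T' a us" for a
      using run_protocol_cong_except[OF neighbours] by blast
    show ?thesis
      unfolding run_protocol.simps later_rounds
      using ldp by (intro pmf_le_scaled_bind_left) (simp_all add: ldp_iff_pmf_le_scaled)
  next
    case False
    with neighbours have "T u = T' u" by auto
    with Cons show ?thesis
      by (simp del: run_protocol.simps(1) add: pmf_le_scaled_bind_right)
  qed
qed

lemma olh_g_ge_2: "olh_g \<epsilon> \<ge> 2"
proof -
  have "\<lceil>exp \<epsilon> + 1\<rceil> \<ge> 2"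
    using exp_gt_zero[of \<epsilon>] by linarith
  then show ?thesis unfolding olh_g_def by linarith
qed

lemma pmf_olh_perturb:
  assumes "x < g" and "g \<ge> 2"
  shows "pmf (olh_perturb \<epsilon> g x) y =
    (if y = x then exp \<epsilon> / (exp \<epsilon> + real g - 1)
     else if y < g then 1 / (exp \<epsilon> + real g - 1) else 0)"
proof -
  define p where "p = exp \<epsilon> / (exp \<epsilon> + real g - 1)"
  have denom_pos: "exp \<epsilon> + real g - 1 > 0"
    using exp_gt_zero[of \<epsilon>] \<open>g \<ge> 2\<close> by linarith
  have p: "0 \<le> p" "p \<le> 1"
    using denom_pos \<open>g \<ge> 2\<close> unfolding p_def by (auto simp: field_simps)
  have others: "finite ({0..<g} - {x})" "card ({0..<g} - {x}) = g - 1"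
    using assms by auto
  then have "{0..<g} - {x} \<noteq> {}"
    using \<open>g \<ge> 2\<close> by force
  have "pmf (olh_perturb \<epsilon> g x) y =
      p * pmf (return_pmf x) y + (1 - p) * pmf (pmf_of_set ({0..<g} - {x})) y"
    unfolding olh_perturb_def p_def[symmetric] pmf_bind
    by (subst integral_measure_pmf[where A = UNIV]) (auto simp: p UNIV_bool)
  also have "\<dots> = (if y = x then p else if y < g then (1 - p) / (real g - 1) else 0)"
    using others \<open>{0..<g} - {x} \<noteq> {}\<close> assms by (auto simp: indicator_def of_nat_diff)
  also have "1 - p = (real g - 1) / (exp \<epsilon> + real g - 1)"
    using denom_pos unfolding p_def by (simp add: field_simps)
  also have "\<dots> / (real g - 1) = 1 / (exp \<epsilon> + real g - 1)"
    using \<open>g \<ge> 2\<close> by simp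
  finally show ?thesis unfolding p_def .
qed

lemma pmf_olh:
  assumes "finite H" "H \<noteq> {}"
  shows "pmf (olh \<epsilon> H u) (h, y) =
    (if h \<in> H then pmf (olh_perturb \<epsilon> (olh_g \<epsilon>) (h u)) y / real (card H) else 0)"
proof -
  have pmf_pair: "pmf (map_pmf (Pair h') P) (h, y) = (if h' = h then pmf P y else 0)"
    for h' and P :: "nat pmf"
  proof (cases "h' = h")
    case True
    then show ?thesis using pmf_map_inj'[of "Pair h" P y] by (simp add: inj_def)
  next
    case False
    then show ?thesis by (auto simp: pmf_eq_0_set_pmf)
  qed
  show ?thesis
    unfolding olh_def pmf_bind_pmf_of_set[OF assms(2,1)] pmf_pair
    using assms by (simp add: sum.delta')
qed

definition olh_floor :: "real \<Rightarrow> ('d \<Rightarrow> nat) set \<Rightarrow> ('d \<Rightarrow> nat) \<times> nat \<Rightarrow> real" where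
  "olh_floor \<epsilon> H = (\<lambda>(h, y). if h \<in> H \<and> y < olh_g \<epsilon>
      then 1 / ((exp \<epsilon> + real (olh_g \<epsilon>) - 1) * real (card H)) else 0)"

lemma pmf_olh_bounds:
  assumes "\<epsilon> \<ge> 0" and "universal_family D (olh_g \<epsilon>) H" and "u \<in> D"
  shows "olh_floor \<epsilon> H z \<le> pmf (olh \<epsilon> H u) z"
    and "pmf (olh \<epsilon> H u) z \<le> exp \<epsilon> * olh_floor \<epsilon> H z"
proof -
  obtain h y where z: "z = (h, y)" by (cases z)
  have H: "finite H" "H \<noteq> {}" and hash_range: "\<forall>h\<in>H. h u < olh_g \<epsilon>"
    using assms(2,3) unfolding universal_family_def by auto
  define c where "c = 1 / ((exp \<epsilon> + real (olh_g \<epsilon>) - 1) * real (card H))"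
  have "exp \<epsilon> + real (olh_g \<epsilon>) - 1 > 0"
    using exp_gt_zero[of \<epsilon>] olh_g_ge_2[of \<epsilon>] by linarith
  then have "c \<ge> 0" unfolding c_def by simp
  moreover have "exp \<epsilon> \<ge> 1" using \<open>\<epsilon> \<ge> 0\<close> by simp
  ultimately have "c \<le> exp \<epsilon> * c" by (simp add: mult_le_cancel_right1)
  moreover have "pmf (olh \<epsilon> H u) z =
      (if h \<in> H \<and> y = h u then exp \<epsilon> * c else olh_floor \<epsilon> H z)"
    using hash_range olh_g_ge_2[of \<epsilon>]
    by (auto simp: z c_def olh_floor_def pmf_olh[OF H] pmf_olh_perturb)
  moreover have "olh_floor \<epsilon> H z \<in> {0, c}"
    by (simp add: z c_def olh_floor_def)
  ultimately show "olh_floor \<epsilon> H z \<le> pmf (olh \<epsilon> H u) z"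
    and "pmf (olh \<epsilon> H u) z \<le> exp \<epsilon> * olh_floor \<epsilon> H z"
    using hash_range by (auto simp: z olh_floor_def c_def)
qed

lemma ldp_bind_olh:
  assumes "\<epsilon> \<ge> 0" and hash: "universal_family D (olh_g \<epsilon>) H"
    and pre: "\<And>t. set_pmf (pre t) \<subseteq> D"
  shows "ldp \<epsilon> (\<lambda>t. pre t \<bind> olh \<epsilon> H)"
  unfolding ldp_def
proof (intro allI)
  fix t t' z
  have "pmf (pre t \<bind> olh \<epsilon> H) z \<le> exp \<epsilon> * olh_floor \<epsilon> H z"
    using pre by (intro pmf_bind_le_const pmf_olh_bounds(2)[OF \<open>\<epsilon> \<ge> 0\<close> hash]) blast
  also have "\<dots> \<le> exp \<epsilon> * pmf (pre t' \<bind> olh \<epsilon> H) z"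
    using pre by (intro mult_left_mono pmf_bind_ge_const pmf_olh_bounds(1)[OF \<open>\<epsilon> \<ge> 0\<close> hash])
      auto
  finally show "pmf (pre t \<bind> olh \<epsilon> H) z \<le> exp \<epsilon> * pmf (pre t' \<bind> olh \<epsilon> H) z" .
qed

theorem theorem4p3:
  fixes \<epsilon> :: real
    and Dom :: "(('d \<Rightarrow> nat) \<times> nat) list \<Rightarrow> 'd set"
    and Hs :: "(('d \<Rightarrow> nat) \<times> nat) list \<Rightarrow> ('d \<Rightarrow> nat) set"
    and pre :: "(('d \<Rightarrow> nat) \<times> nat) list \<Rightarrow> 't \<Rightarrow> 'd pmf"
    and order :: "nat list"
    and n :: nat
    and analyst :: "(('d \<Rightarrow> nat) \<times> nat) list \<Rightarrow> 'o"
  assumes eps: "\<epsilon> > 0"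
    and dom_fin: "\<And>acc. finite (Dom acc)"
    and hash: "\<And>acc. universal_family (Dom acc) (olh_g \<epsilon>) (Hs acc)"
    and pre_dom: "\<And>acc t. set_pmf (pre acc t) \<subseteq> Dom acc"
    and order_distinct: "distinct order"
    and order_users: "set order = {0..<n}"
  shows "(\<forall>acc. ldp \<epsilon> (\<lambda>t. pre acc t \<bind> olh \<epsilon> (Hs acc))) \<and>
         (\<forall>i T T' out. (\<forall>j. j \<noteq> i \<longrightarrow> T j = T' j) \<longrightarrow>
            pmf (map_pmf analyst (run_protocol (\<lambda>acc t. pre acc t \<bind> olh \<epsilon> (Hs acc)) T [] order)) out
            \<le> exp \<epsilon> * pmf (map_pmf analyst (run_protocol (\<lambda>acc t. pre acc t \<bind> olh \<epsilon> (Hs acc)) T' [] order)) out)"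
proof -
  have "\<epsilon> \<ge> 0" using eps by simp
  have round_ldp: "ldp \<epsilon> (\<lambda>t. pre acc t \<bind> olh \<epsilon> (Hs acc))" for acc
    using ldp_bind_olh[OF \<open>\<epsilon> \<ge> 0\<close> hash pre_dom] .
  have "pmf_le_scaled (exp \<epsilon>)
      (map_pmf analyst (run_protocol (\<lambda>acc t. pre acc t \<bind> olh \<epsilon> (Hs acc)) T [] order))
      (map_pmf analyst (run_protocol (\<lambda>acc t. pre acc t \<bind> olh \<epsilon> (Hs acc)) T' [] order))"
    if "\<forall>j. j \<noteq> i \<longrightarrow> T j = T' j" for i and T T' :: "nat \<Rightarrow> 't"
    using round_ldp \<open>\<epsilon> \<ge> 0\<close> that order_distinct
    by (intro pmf_le_scaled_map run_protocol_pmf_le_scaled) auto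
  with round_ldp show ?thesis
    unfolding pmf_le_scaled_def by blast
qed

end
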